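(* Consider a deterministic MDP with finite state space $\mathcal{S}$, finite action space $\mathcal{A}$, deterministic transition $f$, reward $r$, initial state distribution $\mu$, and KL-regularization coefficient $\beta>0$. Let $\pi_{\mathrm{ref}}$ be a reference policy with $\pi_{\mathrm{ref}}(a|s)>0$ for all $s\in\mathcal{S},a\in\mathcal{A}$. Let $\nu_{\mathcal{S}}\in\Delta(\mathcal{S})$ and, for each $s$, $\nu_{\mathcal{A}}(\cdot|s)\in\Delta(\mathcal{A})$ be exploratory, i.e. $\nu_{\mathcal{S}}(s)>0$ and $\nu_{\mathcal{A}}(a|s)>0$ for all $s,a$. Let $\pi^+$ be the solution of $$\min_{\pi\in\Pi}\ \frac12\,\mathbb{E}_{s\sim\nu_{\mathcal{S}}}\mathbb{E}_{a\sim\nu_{\mathcal{A}}(\cdot|s)}\left[\left(\frac1\beta A^{\pi_{\mathrm{ref}}}(s,a)-\log\frac{\pi(a|s)}{\pi_{\mathrm{ref}}(a|s)}\right)^2\right],$$ where $\Pi$ is the set of all policies. Then for every state $s\in\mathcal{S}$ there exists a function $\lambda_s:\Delta(\mathcal{A})\to[0,+\infty)$ such that $$V_\beta^{\pi^+}(\mu)-V_\beta^{\pi_{\mathrm{ref}}}(\mu)\ \ge\ \mathbb{E}_\mu^{\pi^+}\big[\lambda_s(\nu_{\mathcal{A}}(\cdot|s))\big]\ \ge\ 0,$$ and equality holds if and only if $\pi_{\mathrm{ref}}=\pi^*_\beta$.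
   Context: The MDP is deterministic: $s_{t+1}=f(s_t,a_t)$, episodes terminate after a finite (possibly random) number $T$ of steps at a terminal state, and the reward is nonzero only on reaching a terminal state. A policy $\pi$ assigns to each state a distribution $\pi(\cdot|s)\in\Delta(\mathcal{A})$. Unregularized value: $V^\pi(s)=\mathbb{E}[\sum_{t=0}^{T-1} r(s_t,a_t)\mid s_0=s]$ with $a_t\sim\pi(\cdot|s_t)$; $Q^\pi(s,a)=r(s,a)+V^\pi(f(s,a))$; advantage $A^\pi(s,a)=Q^\pi(s,a)-V^\pi(s)$. KL-regularized value: $V_\beta^\pi(s)=\mathbb{E}\big[\sum_{t=0}^{T-1}\big(r(s_t,a_t)-\beta\log\frac{\pi(a_t|s_t)}{\pi_{\mathrm{ref}}(a_t|s_t)}\big)\mid s_0=s\big]$, and $V_\beta^\pi(\mu)=\mathbb{E}_{s\sim\mu}V_\beta^\pi(s)$. $\pi^*_\beta$ denotes the optimal policy maximizing $V_\beta^\pi$. For a function $g$ of states, $\mathbb{E}_\mu^\pi[g(s)]$ denotes $\mathbb{E}[\sum_{t=0}^{T-1} g(s_t)]$ over trajectories with $s_0\sim\mu$, $a_t\sim\pi(\cdot|s_t)$, $s_{t+1}=f(s_t,a_t)$ (the expectation over states visited by $\pi$ from $\mu$). *)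

theory Defs
  imports Complex_Main
begin

definition is_dist :: "('x::finite \<Rightarrow> real) \<Rightarrow> bool" where
  "is_dist p \<longleftrightarrow> (\<forall>x. 0 \<le> p x) \<and> (\<Sum>x\<in>UNIV. p x) = 1"

definition is_policy :: "('s \<Rightarrow> 'a::finite \<Rightarrow> real) \<Rightarrow> bool" where
  "is_policy pol \<longleftrightarrow> (\<forall>s. is_dist (pol s))"

primrec run :: "('s \<Rightarrow> 'a \<Rightarrow> 's) \<Rightarrow> 's \<Rightarrow> (nat \<Rightarrow> 'a) \<Rightarrow> nat \<Rightarrow> 's" where
  "run f s acts 0 = s"
| "run f s acts (Suc n) = f (run f s acts n) (acts n)"

definition terminates_within :: "('s \<Rightarrow> 'a \<Rightarrow> 's) \<Rightarrow> 's set \<Rightarrow> nat \<Rightarrow> bool" where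
  "terminates_within f Term H \<longleftrightarrow> (\<forall>s acts. \<exists>n\<le>H. run f s acts n \<in> Term)"

(* KL-regularized value computed with n steps of look-ahead
   (exact once n is at least the termination bound); beta = 0 gives the unregularized value *)
primrec Vn :: "('s \<Rightarrow> 'a \<Rightarrow> 's) \<Rightarrow> 's set \<Rightarrow> ('s \<Rightarrow> 'a \<Rightarrow> real) \<Rightarrow> real
    \<Rightarrow> ('s \<Rightarrow> 'a::finite \<Rightarrow> real) \<Rightarrow> ('s \<Rightarrow> 'a \<Rightarrow> real) \<Rightarrow> nat \<Rightarrow> 's \<Rightarrow> real" where
  "Vn f Term r beta piref pol 0 s = 0"
| "Vn f Term r beta piref pol (Suc n) s =
     (if s \<in> Term then 0 else
      (\<Sum>a\<in>UNIV. pol s a * (r s a - beta * ln (pol s a / piref s a)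
                              + Vn f Term r beta piref pol n (f s a))))"

definition Vreg where
  "Vreg f Term H r beta piref pol s = Vn f Term r beta piref pol H s"

definition Vreg_mu where
  "Vreg_mu f Term H r beta piref pol mu = (\<Sum>s\<in>UNIV. mu s * Vreg f Term H r beta piref pol s)"

definition Vunreg where
  "Vunreg f Term H r pol s = Vreg f Term H r 0 pol pol s"

definition Qfun where
  "Qfun f Term H r pol s a = r s a + Vunreg f Term H r pol (f s a)"

definition Adv where
  "Adv f Term H r pol s a = Qfun f Term H r pol s a - Vunreg f Term H r pol s"

(* expected sum of g over the (non-terminal) states s_0, ..., s_{T-1} visited by pol *)
primrec Occn :: "('s \<Rightarrow> 'a \<Rightarrow> 's) \<Rightarrow> 's set \<Rightarrow> ('s \<Rightarrow> 'a::finite \<Rightarrow> real)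
    \<Rightarrow> ('s \<Rightarrow> real) \<Rightarrow> nat \<Rightarrow> 's \<Rightarrow> real" where
  "Occn f Term pol g 0 s = 0"
| "Occn f Term pol g (Suc n) s =
     (if s \<in> Term then 0 else g s + (\<Sum>a\<in>UNIV. pol s a * Occn f Term pol g n (f s a)))"

definition visit_exp where
  "visit_exp f Term H pol mu g = (\<Sum>s\<in>UNIV. mu s * Occn f Term pol g H s)"

definition loss where
  "loss f Term H r beta piref nuS nuA pol =
     1/2 * (\<Sum>s\<in>UNIV. nuS s * (\<Sum>a\<in>UNIV. nuA s a *
        (1/beta * Adv f Term H r piref s a - ln (pol s a / piref s a))\<^sup>2))"

end

theory Submission
  imports Defs
begin

(* By the performance difference lemma, V_beta^{pi+}(mu) - V_beta^{piref}(mu) is the expected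
   sum, along trajectories of pi+, of the one-step gain
     g(s) = sum_a pi+(a|s) (A(s,a) - beta log (pi+(a|s) / piref(a|s))),
   so lambda_s := g(s) gives equality in the first inequality once g >= 0 is known.
   First-order optimality of the regression loss makes nu(a|s) w(a) / pi+(a|s) a constant c_s
   in a, where w = A/beta - log (pi+/piref); hence g(s) = beta c_s sum_a pi+(a|s)^2 / nu(a|s).
   Since A(s,.) has piref-mean zero, exp x >= 1 + x forbids w < 0 for all a, so c_s >= 0,
   and c_s = 0 forces log (pi+/piref) = A/beta and then A(s,.) = 0.  As pi+ charges every
   action, a vanishing expected gain makes the advantage of piref vanish at every state
   reachable from mu, and then Gibbs' inequality and the performance difference lemma show
   that no policy beats piref. *)

lemma is_dist_sum: "is_dist p \<Longrightarrow> (\<Sum>x\<in>UNIV. p x) = 1"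
  unfolding is_dist_def by blast

lemma is_dist_nonneg: "is_dist p \<Longrightarrow> 0 \<le> p x"
  unfolding is_dist_def by blast

lemma is_policy_dist: "is_policy pol \<Longrightarrow> is_dist (pol s)"
  unfolding is_policy_def by blast

lemma sum_exp_ge_one:
  fixes q y :: "'a::finite \<Rightarrow> real"
  assumes q: "is_dist q" and y: "(\<Sum>a\<in>UNIV. q a * y a) = 0"
  shows "1 \<le> (\<Sum>a\<in>UNIV. q a * exp (y a))"
proof -
  have "1 = (\<Sum>a\<in>UNIV. q a * (1 + y a))"
    using q y by (simp add: distrib_left sum.distrib is_dist_sum)
  also have "\<dots> \<le> (\<Sum>a\<in>UNIV. q a * exp (y a))"
    using q by (intro sum_mono mult_left_mono) (simp_all add: is_dist_nonneg)
  finally show ?thesis .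
qed

lemma exists_log_ratio_le:
  fixes p q y :: "'a::finite \<Rightarrow> real"
  assumes p: "is_dist p" "\<forall>a. 0 < p a" and q: "is_dist q" "\<forall>a. 0 < q a"
    and y: "(\<Sum>a\<in>UNIV. q a * y a) = 0"
  shows "\<exists>a. ln (p a / q a) \<le> y a"
proof (rule ccontr)
  assume "\<not> (\<exists>a. ln (p a / q a) \<le> y a)"
  then have "exp (y a) < p a / q a" for a
    using p(2) q(2) by (metis exp_less_cancel_iff exp_ln divide_pos_pos not_le)
  then have "q a * exp (y a) < p a" for a
    using q(2) by (simp add: field_simps)
  then have "(\<Sum>a\<in>UNIV. q a * exp (y a)) < (\<Sum>a\<in>UNIV. p a)"
    by (intro sum_strict_mono) auto
  then show False
    using sum_exp_ge_one[OF q(1) y] is_dist_sum[OF p(1)] by simp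
qed

lemma log_ratio_eq_imp_zero:
  fixes p q y :: "'a::finite \<Rightarrow> real"
  assumes p: "is_dist p" "\<forall>a. 0 < p a" and q: "is_dist q" "\<forall>a. 0 < q a"
    and y: "(\<Sum>a\<in>UNIV. q a * y a) = 0" and eq: "\<forall>a. ln (p a / q a) = y a"
  shows "y a = 0"
proof -
  define gap where "gap a = q a * (exp (y a) - (1 + y a))" for a
  have "p a = q a * exp (y a)" for a
    using eq p(2) q(2) by (metis divide_pos_pos exp_ln nonzero_mult_div_cancel_left
        order_less_irrefl times_divide_eq_right)
  then have "(\<Sum>a\<in>UNIV. gap a) = (\<Sum>a\<in>UNIV. p a) - (\<Sum>a\<in>UNIV. q a) - (\<Sum>a\<in>UNIV. q a * y a)"
    by (simp add: gap_def algebra_simps sum_subtractf sum.distrib)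
  then have "(\<Sum>a\<in>UNIV. gap a) = 0"
    using y is_dist_sum[OF p(1)] is_dist_sum[OF q(1)] by simp
  moreover have "0 \<le> gap a" for a
    using q(2) exp_ge_add_one_self[of "y a"] unfolding gap_def by (simp add: less_imp_le)
  ultimately have "gap a = 0"
    by (simp add: sum_nonneg_eq_0_iff)
  then have "exp (y a) = 1 + y a"
    using q(2)[rule_format, of a] unfolding gap_def by simp
  then show ?thesis
    using exp_minus_greater[of "- y a"] by simp
qed

lemma stationary_log_ratio_gain:
  fixes p q nu y :: "'a::finite \<Rightarrow> real"
  assumes p: "is_dist p" "\<forall>a. 0 < p a" and q: "is_dist q" "\<forall>a. 0 < q a"
    and nu: "\<forall>a. 0 < nu a" and y: "(\<Sum>a\<in>UNIV. q a * y a) = 0"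
    and stationary: "\<forall>a b. nu a * (y a - ln (p a / q a)) / p a = nu b * (y b - ln (p b / q b)) / p b"
  shows "0 \<le> (\<Sum>a\<in>UNIV. p a * (y a - ln (p a / q a)))"
    and "(\<Sum>a\<in>UNIV. p a * (y a - ln (p a / q a))) = 0 \<Longrightarrow> y a = 0"
proof -
  obtain a0 where a0: "ln (p a0 / q a0) \<le> y a0"
    using exists_log_ratio_le[OF p q y] by blast
  define c where "c = nu a0 * (y a0 - ln (p a0 / q a0)) / p a0"
  have c: "0 \<le> c"
    using a0 p(2)[rule_format, of a0] nu[rule_format, of a0] unfolding c_def by simp
  have w: "y a - ln (p a / q a) = c * p a / nu a" for a
  proof -
    have "nu a * (y a - ln (p a / q a)) / p a = c"
      using stationary unfolding c_def by blast
    then show ?thesis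
      using p(2)[rule_format, of a] nu[rule_format, of a] by (simp add: field_simps)
  qed
  have gain: "(\<Sum>a\<in>UNIV. p a * (y a - ln (p a / q a))) = c * (\<Sum>a\<in>UNIV. p a ^ 2 / nu a)"
    by (auto simp: w sum_distrib_left power2_eq_square algebra_simps intro!: sum.cong)
  have S: "0 < (\<Sum>a\<in>UNIV. p a ^ 2 / nu a)"
    using p(2) nu by (intro sum_pos divide_pos_pos) (simp_all add: less_imp_neq[symmetric])
  show "0 \<le> (\<Sum>a\<in>UNIV. p a * (y a - ln (p a / q a)))"
    using c S by (simp add: gain)
  assume "(\<Sum>a\<in>UNIV. p a * (y a - ln (p a / q a))) = 0"
  then have "c = 0"
    using S by (simp add: gain)
  then have "\<forall>a. ln (p a / q a) = y a"
    using w by simp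
  then show "y a = 0"
    using log_ratio_eq_imp_zero[OF p q y] by blast
qed

lemma mult_ln_div_ge_diff:
  fixes x z :: real
  assumes "0 \<le> x" "0 < z"
  shows "x - z \<le> x * ln (x / z)"
proof (cases "x = 0")
  case False
  then have x: "0 < x" using assms(1) by simp
  have "ln (z / x) \<le> z / x - 1"
    using x assms(2) by (intro ln_le_minus_one) simp
  then have "1 - z / x \<le> ln (x / z)"
    using x assms(2) by (simp add: ln_div)
  then have "x * (1 - z / x) \<le> x * ln (x / z)"
    using x by (intro mult_left_mono) auto
  moreover have "x * (1 - z / x) = x - z"
    using x by (simp add: field_simps)
  ultimately show ?thesis
    by simp
qed (use assms in simp)

lemma sum_mult_ln_div_nonneg:
  fixes p q :: "'a::finite \<Rightarrow> real"
  assumes p: "is_dist p" and q: "is_dist q" "\<forall>a. 0 < q a"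
  shows "0 \<le> (\<Sum>a\<in>UNIV. p a * ln (p a / q a))"
proof -
  have "0 = (\<Sum>a\<in>UNIV. p a - q a)"
    using is_dist_sum[OF p] is_dist_sum[OF q(1)] by (simp add: sum_subtractf)
  also have "\<dots> \<le> (\<Sum>a\<in>UNIV. p a * ln (p a / q a))"
    using is_dist_nonneg[OF p] q(2) by (intro sum_mono mult_ln_div_ge_diff) auto
  finally show ?thesis .
qed

definition log_regression_loss ::
    "('s::finite \<Rightarrow> real) \<Rightarrow> ('s \<Rightarrow> 'a::finite \<Rightarrow> real) \<Rightarrow> ('s \<Rightarrow> 'a \<Rightarrow> real)
     \<Rightarrow> ('s \<Rightarrow> 'a \<Rightarrow> real) \<Rightarrow> ('s \<Rightarrow> 'a \<Rightarrow> real) \<Rightarrow> real" where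
  "log_regression_loss nuS nuA q y pol =
     (\<Sum>s\<in>UNIV. nuS s * (\<Sum>a\<in>UNIV. nuA s a * (y s a - ln (pol s a / q s a))\<^sup>2))"

lemma log_regression_loss_directional_derivative:
  fixes nuS :: "'s::finite \<Rightarrow> real" and nuA pp q y d :: "'s \<Rightarrow> 'a::finite \<Rightarrow> real"
  assumes pp: "\<forall>s a. 0 < pp s a" and q: "\<forall>s a. 0 < q s a"
  shows "((\<lambda>t. log_regression_loss nuS nuA q y (\<lambda>s a. pp s a + t * d s a)) has_real_derivative
           (\<Sum>s\<in>UNIV. nuS s * (\<Sum>a\<in>UNIV. nuA s a *
              (- 2 * (y s a - ln (pp s a / q s a)) * d s a / pp s a)))) (at 0)"
proof -
  have "((\<lambda>t. (y s a - ln ((pp s a + t * d s a) / q s a))\<^sup>2) has_real_derivative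
          - 2 * (y s a - ln (pp s a / q s a)) * d s a / pp s a) (at 0)" for s a
    using pp[rule_format, of s a] q[rule_format, of s a]
    by (auto intro!: derivative_eq_intros simp: field_simps)
  then show ?thesis
    unfolding log_regression_loss_def by (intro DERIV_sum DERIV_cmult)
qed

lemma log_regression_minimizer_stationary:
  fixes nuS :: "'s::finite \<Rightarrow> real" and nuA pp q y :: "'s \<Rightarrow> 'a::finite \<Rightarrow> real"
  assumes pp: "is_policy pp" "\<forall>s a. 0 < pp s a" and q: "\<forall>s a. 0 < q s a" and nuS: "0 < nuS s"
    and minimal: "\<forall>pol. is_policy pol \<and> (\<forall>s a. 0 < pol s a) \<longrightarrow>
       log_regression_loss nuS nuA q y pp \<le> log_regression_loss nuS nuA q y pol"
  shows "nuA s b * (y s b - ln (pp s b / q s b)) / pp s b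
       = nuA s c * (y s c - ln (pp s c / q s c)) / pp s c"
proof (cases "b = c")
  case False
  define G where "G a = nuA s a * (y s a - ln (pp s a / q s a)) / pp s a" for a
  define d :: "'s \<Rightarrow> 'a \<Rightarrow> real"
    where "d s' a = (if s' = s then (if a = b then 1 else 0) - (if a = c then 1 else 0) else 0)" for s' a
  define pt where "pt t = (\<lambda>s' a. pp s' a + t * d s' a)" for t
  define \<epsilon> where "\<epsilon> = min (pp s b) (pp s c)"
  have "0 < \<epsilon>"
    using pp(2) unfolding \<epsilon>_def by simp
  have pt_pos: "\<forall>s' a. 0 < pt t s' a" if "\<bar>t\<bar> < \<epsilon>" for t
    using that pp(2) unfolding pt_def d_def \<epsilon>_def by (auto simp: abs_less_iff)
  have "(\<Sum>a\<in>UNIV. d s' a) = 0" for s'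
    unfolding d_def by (cases "s' = s") (simp_all add: sum_subtractf)
  then have pt_policy: "is_policy (pt t)" if "\<bar>t\<bar> < \<epsilon>" for t
    using pt_pos[OF that] is_dist_sum[OF is_policy_dist[OF pp(1)]]
    unfolding is_policy_def is_dist_def pt_def
    by (simp add: sum.distrib sum_distrib_left[symmetric] less_imp_le)
  have "\<forall>t. \<bar>0 - t\<bar> < \<epsilon> \<longrightarrow>
          log_regression_loss nuS nuA q y (pt 0) \<le> log_regression_loss nuS nuA q y (pt t)"
    using minimal pt_policy pt_pos by (simp add: pt_def)
  from DERIV_local_min[OF log_regression_loss_directional_derivative[OF pp(2) q] \<open>0 < \<epsilon>\<close>
      this[unfolded pt_def]]
  have derivative_zero: "(\<Sum>s'\<in>UNIV. nuS s' * (\<Sum>a\<in>UNIV. nuA s' a *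
          (- 2 * (y s' a - ln (pp s' a / q s' a)) * d s' a / pp s' a))) = 0" .
  have "nuA s' a * (- 2 * (y s' a - ln (pp s' a / q s' a)) * d s' a / pp s' a)
      = (if s' = s then (if a = c then 2 * G a else 0) - (if a = b then 2 * G a else 0) else 0)"
    for s' a
    using False unfolding d_def G_def by (auto simp: algebra_simps diff_divide_distrib)
  then have "(\<Sum>a\<in>UNIV. nuA s' a * (- 2 * (y s' a - ln (pp s' a / q s' a)) * d s' a / pp s' a))
      = (if s' = s then 2 * (G c - G b) else 0)" for s'
    by (cases "s' = s") (simp_all add: sum_subtractf)
  then have "(\<Sum>s'\<in>UNIV. nuS s' * (\<Sum>a\<in>UNIV. nuA s' a *
          (- 2 * (y s' a - ln (pp s' a / q s' a)) * d s' a / pp s' a))) = 2 * nuS s * (G c - G b)"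
    by (simp add: if_distrib[of "\<lambda>x. nuS _ * x"] cong: if_cong)
  then show ?thesis
    using derivative_zero nuS unfolding G_def by simp
qed simp

definition reaches_within :: "('s \<Rightarrow> 'a \<Rightarrow> 's) \<Rightarrow> 's set \<Rightarrow> nat \<Rightarrow> 's \<Rightarrow> bool" where
  "reaches_within f T k s \<longleftrightarrow> (\<forall>acts. \<exists>n\<le>k. run f s acts n \<in> T)"

lemma run_case_nat_Suc: "run f s (case_nat a acts) (Suc n) = run f (f s a) acts n"
  by (induction n) auto

lemma reaches_within_0: "reaches_within f T 0 s \<Longrightarrow> s \<in> T"
  unfolding reaches_within_def by (metis le_zero_eq run.simps(1))

lemma reaches_within_Suc:
  assumes "reaches_within f T (Suc k) s" "s \<notin> T"
  shows "reaches_within f T k (f s a)"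
  unfolding reaches_within_def
proof
  fix acts
  obtain n where n: "n \<le> Suc k" "run f s (case_nat a acts) n \<in> T"
    using assms(1) unfolding reaches_within_def by blast
  then obtain m where "n = Suc m"
    using assms(2) by (cases n) auto
  then show "\<exists>n\<le>k. run f (f s a) acts n \<in> T"
    using n run_case_nat_Suc[of f s a acts m] by auto
qed

lemma terminates_within_reaches_within:
  "terminates_within f T H \<Longrightarrow> reaches_within f T H s"
  unfolding terminates_within_def reaches_within_def by blast

lemma Vn_eq_if_reaches_within:
  "reaches_within f T k s \<Longrightarrow> k \<le> n \<Longrightarrow> Vn f T r beta q pol n s = Vn f T r beta q pol k s"
proof (induction k arbitrary: s n)
  case 0
  then show ?case
    using reaches_within_0[of f T s] by (cases n) auto
next
  case (Suc k)
  then obtain m where m: "n = Suc m" "k \<le> m"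
    by (cases n) auto
  show ?case
  proof (cases "s \<in> T")
    case False
    then have "Vn f T r beta q pol m (f s a) = Vn f T r beta q pol k (f s a)" for a
      using Suc.IH[OF reaches_within_Suc[OF Suc.prems(1)] m(2)] by blast
    then show ?thesis
      using m False by simp
  qed (use m in simp)
qed

lemma Vn_self_reference: "Vn f T r beta pol pol n s = Vn f T r 0 pol pol n s"
  by (induction n arbitrary: s) (auto intro!: sum.cong)

lemma Occn_cong:
  "(\<And>s. s \<notin> T \<Longrightarrow> g s = g' s) \<Longrightarrow> Occn f T pol g n s = Occn f T pol g' n s"
  by (induction n arbitrary: s) auto

lemma Occn_nonneg:
  "(\<And>s. s \<notin> T \<Longrightarrow> 0 \<le> g s) \<Longrightarrow> (\<And>s a. 0 \<le> pol s a) \<Longrightarrow> 0 \<le> Occn f T pol g n s"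
  by (induction n arbitrary: s) (auto intro!: sum_nonneg add_nonneg_nonneg)

lemma Occn_nonpos_if_Occn_zero:
  assumes g: "\<And>s. s \<notin> T \<Longrightarrow> 0 \<le> g s" and pp: "\<And>s a. 0 < pp s a"
    and g': "\<And>s. s \<notin> T \<Longrightarrow> g s = 0 \<Longrightarrow> g' s \<le> 0" and pol: "\<And>s a. 0 \<le> pol s a"
  shows "Occn f T pp g n s = 0 \<Longrightarrow> Occn f T pol g' n s \<le> 0"
proof (induction n arbitrary: s)
  case (Suc n)
  show ?case
  proof (cases "s \<in> T")
    case False
    have terms_nonneg: "0 \<le> pp s a * Occn f T pp g n (f s a)" for a
      using Occn_nonneg[of T g pp] g pp by (simp add: less_imp_le)
    then have "0 \<le> (\<Sum>a\<in>UNIV. pp s a * Occn f T pp g n (f s a))"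
      by (rule sum_nonneg)
    then have "g s = 0" and "(\<Sum>a\<in>UNIV. pp s a * Occn f T pp g n (f s a)) = 0"
      using Suc.prems False g[OF False] by simp_all
    then have "Occn f T pp g n (f s a) = 0" for a
      using terms_nonneg pp[of s a] by (simp add: sum_nonneg_eq_0_iff) (metis order_less_irrefl)
    then have "(\<Sum>a\<in>UNIV. pol s a * Occn f T pol g' n (f s a)) \<le> 0"
      using Suc.IH pol by (intro sum_nonpos mult_nonneg_nonpos) auto
    then show ?thesis
      using False g'[OF False \<open>g s = 0\<close>] by simp
  qed simp
qed simp

lemma visit_exp_cong:
  "(\<And>s. s \<notin> T \<Longrightarrow> g s = g' s) \<Longrightarrow> visit_exp f T H pol mu g = visit_exp f T H pol mu g'"
  unfolding visit_exp_def by (simp add: Occn_cong[of T g g'])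

lemma visit_exp_nonneg:
  "is_dist mu \<Longrightarrow> (\<And>s. s \<notin> T \<Longrightarrow> 0 \<le> g s) \<Longrightarrow> (\<And>s a. 0 \<le> pol s a)
   \<Longrightarrow> 0 \<le> visit_exp f T H pol mu g"
  unfolding visit_exp_def
  by (intro sum_nonneg mult_nonneg_nonneg) (auto intro: is_dist_nonneg Occn_nonneg)

lemma visit_exp_nonpos_if_visit_exp_zero:
  assumes g: "\<And>s. s \<notin> T \<Longrightarrow> 0 \<le> g s" and pp: "\<And>s a. 0 < pp s a"
    and g': "\<And>s. s \<notin> T \<Longrightarrow> g s = 0 \<Longrightarrow> g' s \<le> 0" and pol: "\<And>s a. 0 \<le> pol s a"
    and mu: "is_dist mu" and zero: "visit_exp f T H pp mu g = 0"
  shows "visit_exp f T H pol mu g' \<le> 0"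
proof -
  have terms_nonneg: "0 \<le> mu s * Occn f T pp g H s" for s
    using g pp by (intro mult_nonneg_nonneg is_dist_nonneg[OF mu] Occn_nonneg) (simp_all add: less_imp_le)
  have "mu s * Occn f T pol g' H s \<le> 0" for s
  proof (cases "mu s = 0")
    case False
    have "\<forall>s\<in>UNIV. mu s * Occn f T pp g H s = 0"
      using zero terms_nonneg unfolding visit_exp_def by (simp add: sum_nonneg_eq_0_iff)
    then have "Occn f T pp g H s = 0"
      using False by fastforce
    then have "Occn f T pol g' H s \<le> 0"
      using Occn_nonpos_if_Occn_zero[of T g pp g' pol f H s] g pp g' pol by blast
    then show ?thesis
      using is_dist_nonneg[OF mu, of s] by (simp add: mult_nonneg_nonpos)
  qed simp
  then show ?thesis
    unfolding visit_exp_def by (intro sum_nonpos)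
qed

locale terminating_mdp =
  fixes f :: "'s::finite \<Rightarrow> 'a::finite \<Rightarrow> 's" and T :: "'s set" and H :: nat
    and r :: "'s \<Rightarrow> 'a \<Rightarrow> real" and beta :: real and piref :: "'s \<Rightarrow> 'a \<Rightarrow> real"
  assumes terminates: "terminates_within f T H"
begin

abbreviation V where "V \<equiv> Vunreg f T H r piref"
abbreviation A where "A \<equiv> Adv f T H r piref"

lemma Adv_eq: "A s a = r s a + V (f s a) - V s"
  unfolding Adv_def Qfun_def ..

lemma Vn_piref_eq_Vunreg:
  assumes "reaches_within f T k s" "k \<le> H"
  shows "Vn f T r b piref piref k s = V s"
  unfolding Vunreg_def Vreg_def Vn_self_reference[of f T r b]
  using Vn_eq_if_reaches_within[OF assms] by simp

lemma Vunreg_Bellman: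
  assumes "s \<notin> T"
  shows "V s = (\<Sum>a\<in>UNIV. piref s a * (r s a + V (f s a)))"
proof -
  have reach: "reaches_within f T H s"
    using terminates by (rule terminates_within_reaches_within)
  then obtain m where m: "H = Suc m"
    using assms reaches_within_0[of f T s] by (cases H) auto
  have "Vn f T r 0 piref piref m (f s a) = V (f s a)" for a
    using Vn_piref_eq_Vunreg[OF reaches_within_Suc[OF reach[unfolded m] assms]] m by simp
  then show ?thesis
    using assms unfolding Vunreg_def Vreg_def m by simp
qed

definition gain :: "('s \<Rightarrow> 'a \<Rightarrow> real) \<Rightarrow> 's \<Rightarrow> real" where
  "gain pol s = (\<Sum>a\<in>UNIV. pol s a * (A s a - beta * ln (pol s a / piref s a)))"

lemma performance_difference:
  assumes pol: "is_policy pol"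
  shows "k \<le> H \<Longrightarrow> reaches_within f T k s \<Longrightarrow>
    Vn f T r beta piref pol k s - Vn f T r beta piref piref k s = Occn f T pol (gain pol) k s"
proof (induction k arbitrary: s)
  case (Suc k)
  show ?case
  proof (cases "s \<in> T")
    case False
    have reach: "reaches_within f T k (f s a)" for a
      using reaches_within_Suc[OF Suc.prems(2) False] .
    have "k \<le> H"
      using Suc.prems(1) by simp
    have IH: "Vn f T r beta piref pol k (f s a) = V (f s a) + Occn f T pol (gain pol) k (f s a)" for a
      using Suc.IH[OF \<open>k \<le> H\<close> reach[of a]] Vn_piref_eq_Vunreg[where b = beta, OF reach[of a] \<open>k \<le> H\<close>]
      by linarith
    have "Vn f T r beta piref pol (Suc k) s - Vn f T r beta piref piref (Suc k) s
      = (\<Sum>a\<in>UNIV. pol s a * (r s a - beta * ln (pol s a / piref s a) + V (f s a)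
            + Occn f T pol (gain pol) k (f s a))) - V s"
      using False Vn_piref_eq_Vunreg[OF Suc.prems(2,1)] IH by (simp add: add.assoc)
    also have "\<dots> = (\<Sum>a\<in>UNIV. pol s a * (A s a - beta * ln (pol s a / piref s a))
          + pol s a * Occn f T pol (gain pol) k (f s a)) + (\<Sum>a\<in>UNIV. pol s a) * V s - V s"
      by (simp add: Adv_eq algebra_simps sum.distrib sum_distrib_right sum_subtractf)
    also have "\<dots> = Occn f T pol (gain pol) (Suc k) s"
      using False is_dist_sum[OF is_policy_dist[OF pol]] by (simp add: gain_def sum.distrib)
    finally show ?thesis .
  qed simp
qed simp

lemma Vreg_mu_diff:
  assumes "is_policy pol"
  shows "Vreg_mu f T H r beta piref pol mu - Vreg_mu f T H r beta piref piref mu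
       = visit_exp f T H pol mu (gain pol)"
  unfolding Vreg_mu_def visit_exp_def Vreg_def
  by (simp add: performance_difference[OF assms order_refl terminates_within_reaches_within[OF terminates],
        symmetric] sum_subtractf right_diff_distrib)

end

locale kl_regularized_mdp = terminating_mdp f T H r beta piref
  for f :: "'s::finite \<Rightarrow> 'a::finite \<Rightarrow> 's" and T H r beta piref +
  assumes beta_pos: "0 < beta" and piref_policy: "is_policy piref"
    and piref_pos: "\<forall>s a. 0 < piref s a"
begin

lemma Adv_mean_zero:
  assumes "s \<notin> T"
  shows "(\<Sum>a\<in>UNIV. piref s a * A s a) = 0"
proof -
  have "(\<Sum>a\<in>UNIV. piref s a * A s a)
      = (\<Sum>a\<in>UNIV. piref s a * (r s a + V (f s a))) - (\<Sum>a\<in>UNIV. piref s a) * V s"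
    by (simp add: Adv_eq algebra_simps sum_subtractf sum_distrib_right)
  then show ?thesis
    using Vunreg_Bellman[OF assms] is_dist_sum[OF is_policy_dist[OF piref_policy]] by simp
qed

lemma gain_nonpos_if_Adv_zero:
  assumes pol: "is_policy pol" and A_zero: "\<forall>a. A s a = 0"
  shows "gain pol s \<le> 0"
proof -
  have "gain pol s = - beta * (\<Sum>a\<in>UNIV. pol s a * ln (pol s a / piref s a))"
    unfolding gain_def using A_zero by (simp add: sum_distrib_left algebra_simps)
  moreover have "0 \<le> (\<Sum>a\<in>UNIV. pol s a * ln (pol s a / piref s a))"
    using piref_pos by (intro sum_mult_ln_div_nonneg is_policy_dist pol piref_policy) simp
  ultimately show ?thesis
    using beta_pos by (simp add: mult_nonneg_nonneg)
qed

lemma loss_eq_log_regression_loss: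
  "loss f T H r beta piref nuS nuA pol
     = 1/2 * log_regression_loss nuS nuA piref (\<lambda>s a. 1/beta * A s a) pol"
  unfolding loss_def log_regression_loss_def ..

lemma gain_of_loss_minimizer:
  assumes pp: "is_policy pp" "\<forall>s a. 0 < pp s a" and nuS: "\<forall>s. 0 < nuS s"
    and nuA: "\<forall>s a. 0 < nuA s a" and s: "s \<notin> T"
    and minimal: "\<forall>pol. is_policy pol \<and> (\<forall>s a. 0 < pol s a) \<longrightarrow>
       loss f T H r beta piref nuS nuA pp \<le> loss f T H r beta piref nuS nuA pol"
  shows "0 \<le> gain pp s" and "gain pp s = 0 \<Longrightarrow> A s a = 0"
proof -
  define y where "y a = 1/beta * A s a" for a
  have "\<forall>pol. is_policy pol \<and> (\<forall>s a. 0 < pol s a) \<longrightarrow>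
      log_regression_loss nuS nuA piref (\<lambda>s a. 1/beta * A s a) pp
      \<le> log_regression_loss nuS nuA piref (\<lambda>s a. 1/beta * A s a) pol"
    using minimal unfolding loss_eq_log_regression_loss by simp
  from log_regression_minimizer_stationary[OF pp piref_pos _ this] nuS
  have "\<forall>a b. nuA s a * (y a - ln (pp s a / piref s a)) / pp s a
              = nuA s b * (y b - ln (pp s b / piref s b)) / pp s b"
    unfolding y_def by blast
  moreover have "(\<Sum>a\<in>UNIV. piref s a * y a) = 0"
    using Adv_mean_zero[OF s] unfolding y_def by (simp add: sum_divide_distrib[symmetric])
  moreover have "gain pp s = beta * (\<Sum>a\<in>UNIV. pp s a * (y a - ln (pp s a / piref s a)))"
    unfolding gain_def y_def using beta_pos by (simp add: sum_distrib_left algebra_simps)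
  ultimately show "0 \<le> gain pp s" and "gain pp s = 0 \<Longrightarrow> A s a = 0"
    using stationary_log_ratio_gain[of "pp s" "piref s" "nuA s" y] beta_pos
      is_policy_dist[OF pp(1)] is_policy_dist[OF piref_policy] pp(2) piref_pos nuA
    by (simp_all add: y_def)
qed

lemma piref_optimal_iff_visit_gain_zero:
  assumes pp: "is_policy pp" "\<forall>s a. 0 < pp s a"
    and gain_nonneg: "\<And>s. s \<notin> T \<Longrightarrow> 0 \<le> gain pp s"
    and gain_zero: "\<And>s a. s \<notin> T \<Longrightarrow> gain pp s = 0 \<Longrightarrow> A s a = 0"
    and mu: "is_dist mu"
  shows "visit_exp f T H pp mu (gain pp) = 0 \<longleftrightarrow>
    (\<forall>pol. is_policy pol \<longrightarrow>
       Vreg_mu f T H r beta piref pol mu \<le> Vreg_mu f T H r beta piref piref mu)"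
proof (intro iffI allI impI)
  fix pol :: "'s \<Rightarrow> 'a \<Rightarrow> real"
  assume zero: "visit_exp f T H pp mu (gain pp) = 0" and pol: "is_policy pol"
  have "visit_exp f T H pol mu (gain pol) \<le> 0"
  proof (rule visit_exp_nonpos_if_visit_exp_zero[OF gain_nonneg _ _ _ mu zero])
    show "gain pol s \<le> 0" if "s \<notin> T" "gain pp s = 0" for s
      using gain_nonpos_if_Adv_zero[OF pol] gain_zero that by blast
  qed (use pp(2) is_dist_nonneg[OF is_policy_dist[OF pol]] in auto)
  then show "Vreg_mu f T H r beta piref pol mu \<le> Vreg_mu f T H r beta piref piref mu"
    using Vreg_mu_diff[OF pol, of mu] by simp
next
  assume "\<forall>pol. is_policy pol \<longrightarrow>
    Vreg_mu f T H r beta piref pol mu \<le> Vreg_mu f T H r beta piref piref mu"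
  then have "Vreg_mu f T H r beta piref pp mu \<le> Vreg_mu f T H r beta piref piref mu"
    using pp(1) by blast
  moreover have "0 \<le> visit_exp f T H pp mu (gain pp)"
    using gain_nonneg pp(2) by (intro visit_exp_nonneg[OF mu]) (auto simp: less_imp_le)
  ultimately show "visit_exp f T H pp mu (gain pp) = 0"
    using Vreg_mu_diff[OF pp(1), of mu] by linarith
qed

end

theorem mainTheorem2:
  fixes f :: "'s::finite \<Rightarrow> 'a::finite \<Rightarrow> 's"
    and Term :: "'s set" and H :: nat
    and r :: "'s \<Rightarrow> 'a \<Rightarrow> real" and beta :: real
    and mu nuS :: "'s \<Rightarrow> real"
    and piref nuA piplus :: "'s \<Rightarrow> 'a \<Rightarrow> real"
  assumes hterm: "terminates_within f Term H"
    and rew: "\<forall>s a. f s a \<notin> Term \<longrightarrow> r s a = 0"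
    and hbeta: "beta > 0"
    and mu: "is_dist mu"
    and piref: "is_policy piref" "\<forall>s a. piref s a > 0"
    and nuS: "is_dist nuS" "\<forall>s. nuS s > 0"
    and nuA: "is_policy nuA" "\<forall>s a. nuA s a > 0"
    and piplus: "is_policy piplus" "\<forall>s a. piplus s a > 0"
    and piplus_min: "\<forall>pol. is_policy pol \<and> (\<forall>s a. pol s a > 0) \<longrightarrow>
           loss f Term H r beta piref nuS nuA piplus \<le> loss f Term H r beta piref nuS nuA pol"
  shows "\<exists>lam :: 's \<Rightarrow> ('a \<Rightarrow> real) \<Rightarrow> real.
           (\<forall>s p. 0 \<le> lam s p) \<and>
           (let D = Vreg_mu f Term H r beta piref piplus mu - Vreg_mu f Term H r beta piref piref mu;
                E = visit_exp f Term H piplus mu (\<lambda>s. lam s (nuA s))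
            in D \<ge> E \<and> E \<ge> 0 \<and>
               ((D = E \<and> E = 0) \<longleftrightarrow>
                (\<forall>pol. is_policy pol \<longrightarrow>
                   Vreg_mu f Term H r beta piref pol mu \<le> Vreg_mu f Term H r beta piref piref mu)))"
proof -
  interpret kl_regularized_mdp f Term H r beta piref
    using hterm hbeta piref by unfold_locales auto
  define lam :: "'s \<Rightarrow> ('a \<Rightarrow> real) \<Rightarrow> real" where "lam s p = max 0 (gain piplus s)" for s p
  have gain_nonneg: "\<And>s. s \<notin> Term \<Longrightarrow> 0 \<le> gain piplus s"
    and gain_zero: "\<And>s a. s \<notin> Term \<Longrightarrow> gain piplus s = 0 \<Longrightarrow> A s a = 0"
    using gain_of_loss_minimizer[OF piplus nuS(2) nuA(2) _ piplus_min] by blast+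
  have lam_nonneg: "\<forall>s p. 0 \<le> lam s p"
    by (simp add: lam_def)
  have D: "Vreg_mu f Term H r beta piref piplus mu - Vreg_mu f Term H r beta piref piref mu
      = visit_exp f Term H piplus mu (gain piplus)"
    by (rule Vreg_mu_diff[OF piplus(1)])
  have E: "visit_exp f Term H piplus mu (\<lambda>s. lam s (nuA s))
      = visit_exp f Term H piplus mu (gain piplus)"
    unfolding lam_def by (rule visit_exp_cong) (simp add: gain_nonneg)
  have "0 \<le> visit_exp f Term H piplus mu (gain piplus)"
    using gain_nonneg piplus(2) by (intro visit_exp_nonneg[OF mu]) (auto simp: less_imp_le)
  then show ?thesis
    unfolding Let_def D
    using lam_nonneg piref_optimal_iff_visit_gain_zero[OF piplus gain_nonneg gain_zero mu]
    by (intro exI[of _ lam] conjI) (simp_all only: E order_refl simp_thms)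
qed

end
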